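(* For every $t\in\mathbb{R}$, the points $\mathbf R(t),\mathbf R(t+\tfrac13),\mathbf R(t+\tfrac23)$ are mutually orthogonal, and the closure of the open octant $$O(t):=\{\mathbf r\in S^2 : \mathbf r\cdot\mathbf R(t+s)>0 \text{ for all } s\in\{0,\tfrac13,\tfrac23\}\}$$ satisfies $\overline{O(t)}\subseteq A$.
   Context: For $t\in[-\tfrac12,0)$ define points of $S^2\subset\mathbb{R}^3$: $\mathbf r_1(t)=\big(\tfrac{1}{\sqrt2},\,t,\,\sqrt{\tfrac12-t^2}\big)$, $\mathbf r_2(t)=\Big(-\tfrac{\frac12+t}{1+t},\,\tfrac1{\sqrt2},\,\tfrac1{\sqrt2}\tfrac{\sqrt{\frac12-t^2}}{1+t}\Big)$, $\mathbf r_3(t)=\mathbf r_1(t)\times\mathbf r_2(t)=\Big(-\tfrac1{\sqrt2}\tfrac{\sqrt{\frac12-t^2}}{1+t},\,-\sqrt{\tfrac12-t^2},\,\tfrac{\frac12+t+t^2}{1+t}\Big)$. Let $R_{\pi/2}$ be the rotation $(x,y,z)\mapsto(-y,x,z)$ (by $\pi/2$ about the $z$-axis). Define $\mathbf r_0:[0,\tfrac14)\to S^2$ by $\mathbf r_0(t)=\mathbf r_1(6t-\tfrac12)$ for $t\in[0,\tfrac1{12})$, $\mathbf r_0(t)=R_{\pi/2}^3\mathbf r_2(6t-1)$ for $t\in[\tfrac1{12},\tfrac16)$, $\mathbf r_0(t)=R_{\pi/2}^2\mathbf r_3(6t-\tfrac32)$ for $t\in[\tfrac16,\tfrac14)$.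 Define $\mathbf R:[0,1)\to S^2$ by $\mathbf R(t)=R_{\pi/2}^k\,\mathbf r_0(t-\tfrac k4)$ for $t\in[\tfrac k4,\tfrac{k+1}4)$, $k=0,1,2,3$, and extend $\mathbf R$ to $\mathbb R$ periodically with period $1$: $\mathbf R(t):=\mathbf R(t-\lfloor t\rfloor)$. The image $\Gamma=\mathbf R(\mathbb R)$ is a closed curve on $S^2$; let $A\subseteq S^2$ be the closed region bounded by $\Gamma$ containing the north pole, i.e. $A=\Gamma\cup C$, where $C$ is the connected component of $S^2\setminus\Gamma$ containing $(0,0,1)$. *)

theory Defs
  imports "HOL-Analysis.Analysis"
begin

definition r1 :: "real \<Rightarrow> real^3" where
  "r1 t = vector [1 / sqrt 2, t, sqrt (1/2 - t^2)]"

definition r2 :: "real \<Rightarrow> real^3" where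
  "r2 t = vector [- ((1/2 + t) / (1 + t)), 1 / sqrt 2,
                  (1 / sqrt 2) * (sqrt (1/2 - t^2) / (1 + t))]"

definition r3 :: "real \<Rightarrow> real^3" where
  "r3 t = cross3 (r1 t) (r2 t)"

definition rotz :: "real^3 \<Rightarrow> real^3" where
  "rotz v = vector [- (v$2), v$1, v$3]"

definition r0 :: "real \<Rightarrow> real^3" where
  "r0 t = (if t < 1/12 then r1 (6*t - 1/2)
           else if t < 1/6 then (rotz ^^ 3) (r2 (6*t - 1))
           else (rotz ^^ 2) (r3 (6*t - 3/2)))"

definition Rc :: "real \<Rightarrow> real^3" where
  "Rc t = (let u = t - of_int \<lfloor>t\<rfloor>; k = nat \<lfloor>4 * u\<rfloor>
           in (rotz ^^ k) (r0 (u - real k / 4)))"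

definition Gamma :: "(real^3) set" where
  "Gamma = range Rc"

definition northpole :: "real^3" where
  "northpole = vector [0, 0, 1]"

definition regionA :: "(real^3) set" where
  "regionA = Gamma \<union> connected_component_set (sphere 0 1 - Gamma) northpole"

definition octant :: "real \<Rightarrow> (real^3) set" where
  "octant t = {r \<in> sphere 0 1. \<forall>s \<in> {0, 1/3, 2/3}. r \<bullet> Rc (t + s) > 0}"

end

theory Submission
  imports Defs
begin

text \<open>
  On each twelfth of the period, R is a power of the rotation rotz applied to one of r1, r2, r3
  at a common parameter s in [-1/2, 0), and shifting t by 1/3 keeps the rotation while passing
  from r1 to r2 to r3. As r1 s, r2 s and r3 s = r1 s \<times> r2 s are pairwise orthogonal, this gives
  the orthogonality. The open octant O(t) is connected (the radial projection of a convex cone),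
  contains the north pole (every point of the curve lies in the upper hemisphere) and misses the
  curve: after the same reduction to frames, a point rotz^j (r_i u) never has positive inner
  product with all of r1 s, r2 s, r3 s, which comes down to a handful of polynomial inequalities
  proved by comparing squares. So O(t) lies in the component of the complement of the curve
  containing the north pole, and so does every point of its closure off the curve.
\<close>

section \<open>Rotation about the vertical axis\<close>

lemma inner_vector3:
  "(vector [a1, a2, a3] :: real^3) \<bullet> vector [b1, b2, b3] = a1 * b1 + a2 * b2 + a3 * b3"
  by (simp add: inner_vec_def sum_3)

lemma vector3_eta: "(v::real^3) = vector [v$1, v$2, v$3]"
  by (simp add: vec_eq_iff vector_def forall_3)

lemma rotz_vector: "rotz (vector [x, y, z]) = vector [-y, x, z]"
  by (simp add: rotz_def)

lemma funpow_rotz_vector: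
  "(rotz^^2) (vector [x, y, z]) = vector [-x, -y, z]"
  "(rotz^^3) (vector [x, y, z]) = vector [y, -x, z]"
  by (simp_all add: eval_nat_numeral rotz_vector)

lemma inner_rotz: "rotz u \<bullet> rotz v = u \<bullet> v"
  by (subst (3) vector3_eta, subst (4) vector3_eta) (simp add: rotz_def inner_vector3)

lemma inner_funpow_rotz: "(rotz^^n) u \<bullet> (rotz^^n) v = u \<bullet> v"
  by (induction n) (simp_all add: inner_rotz)

lemma funpow_rotz_mod4: "rotz^^n = rotz^^(n mod 4)"
proof -
  have "rotz^^4 = id"
    by (rule ext, subst vector3_eta) (simp add: rotz_def numeral_eq_Suc)
  then have "rotz^^(4 * q) = id" for q
    by (induction q) (simp_all add: funpow_add)
  then have "rotz^^(n mod 4 + 4 * (n div 4)) = rotz^^(n mod 4)"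
    by (simp only: funpow_add) simp
  then show ?thesis by simp
qed

lemma funpow_rotz_cong:
  "m mod 4 = n mod 4 \<Longrightarrow> (rotz^^m) v = (rotz^^n) v"
  by (metis funpow_rotz_mod4)

lemma funpow_rotz_nth3: "((rotz^^n) v) $ 3 = v $ 3"
  by (induction n) (simp_all add: rotz_def)

lemma inner_funpow_rotz_shift: "(rotz^^m) v \<bullet> (rotz^^k) w = (rotz^^(m + 3 * k)) v \<bullet> w"
proof -
  have "(rotz^^k) ((rotz^^(m + 3 * k)) v) = (rotz^^(k + (m + 3 * k))) v"
    by (simp only: funpow_add comp_apply)
  also have "\<dots> = (rotz^^m) v"
    by (rule funpow_rotz_cong) presburger
  finally show ?thesis by (metis inner_funpow_rotz)
qed

lemma funpow_rotz_cases:
  obtains "(rotz^^j) (vector [x, y, z]) = vector [x, y, z]"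
  | "(rotz^^j) (vector [x, y, z]) = vector [-y, x, z]"
  | "(rotz^^j) (vector [x, y, z]) = vector [-x, -y, z]"
  | "(rotz^^j) (vector [x, y, z]) = vector [y, -x, z]"
proof -
  have "(rotz^^j) (vector [x, y, z]) = (rotz^^(j mod 4)) (vector [x, y, z])"
    by (rule funpow_rotz_cong) simp
  moreover have "j mod 4 = 0 \<or> j mod 4 = 1 \<or> j mod 4 = 2 \<or> j mod 4 = 3"
    by presburger
  ultimately show ?thesis
    using that by (auto simp: rotz_vector funpow_rotz_vector)
qed

section \<open>The frames r1, r2, r3 and the curve\<close>

lemma frame_coordinates:
  fixes s :: real
  assumes "-1/2 \<le> s" "s < 0"
  obtains c a i where "c = 1 / sqrt 2" "c * c = 1/2" "c > 0"
    "a * a = 1/2 - s * s" "a \<ge> 0" "i * (1 + s) = 1" "i > 0"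
    "r1 s = vector [c, s, a]"
    "r2 s = vector [- ((1/2 + s) * i), c, c * a * i]"
    "r3 s = vector [- c * a * i, - a, (1/2 + s + s^2) * i]"
proof
  define c a i where "c = 1 / sqrt (2::real)" and "a = sqrt (1/2 - s^2)" and "i = 1 / (1 + s)"
  have "s^2 \<le> (1/2)^2"
    using assms by (intro power2_le_iff_abs_le[THEN iffD2]) auto
  then show a: "a * a = 1/2 - s * s" "a \<ge> 0"
    unfolding a_def by (simp_all add: power2_eq_square)
  show c: "c = 1 / sqrt 2" "c * c = 1/2" "c > 0"
    unfolding c_def by (simp_all add: divide_simps)
  show i: "i * (1 + s) = 1" "i > 0"
    unfolding i_def using assms by simp_all
  show r1: "r1 s = vector [c, s, a]" and r2: "r2 s = vector [- ((1/2 + s) * i), c, c * a * i]"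
    by (simp_all add: r1_def r2_def c_def a_def i_def)
  show "r3 s = vector [- c * a * i, - a, (1/2 + s + s^2) * i]"
    unfolding r3_def r1 r2 using i(1) c(2)
    by (simp add: cross3_def vec_eq_iff forall_3) algebra
qed

lemma quadratic_pos: "0 < 1/2 + s + (s::real)^2"
  using zero_le_power2[of "s + 1/2"] by (simp add: power2_eq_square algebra_simps)

definition frame :: "nat \<Rightarrow> real \<Rightarrow> real^3" where
  "frame j = (if j mod 3 = 0 then r1 else if j mod 3 = 1 then r2 else r3)"

lemma frame_mod3: "frame (j mod 3) = frame j"
  by (simp add: frame_def)

lemma frame_shift_image: "(\<lambda>i. frame (m + i) s) ` {..<3} = {r1 s, r2 s, r3 s}"
proof -
  have "{..<3::nat} = {0, 1, 2}" by auto
  then have "(\<lambda>i. frame (m + i) s) ` {..<3} = {frame m s, frame (m + 1) s, frame (m + 2) s}"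
    by simp
  moreover have "m mod 3 = 0 \<and> (m + 1) mod 3 = 1 \<and> (m + 2) mod 3 = 2
    \<or> m mod 3 = 1 \<and> (m + 1) mod 3 = 2 \<and> (m + 2) mod 3 = 0
    \<or> m mod 3 = 2 \<and> (m + 1) mod 3 = 0 \<and> (m + 2) mod 3 = 1"
    by presburger
  ultimately show ?thesis
    by (auto simp: frame_def)
qed

lemma frame_orthogonal:
  assumes "-1/2 \<le> s" "s < 0" "i mod 3 \<noteq> j mod 3"
  shows "frame i s \<bullet> frame j s = 0"
proof -
  obtain c a d where cad: "c * c = 1/2" "a * a = 1/2 - s * s" "d * (1 + s) = 1"
    and r12: "r1 s = vector [c, s, a]" "r2 s = vector [- ((1/2 + s) * d), c, c * a * d]"
    using frame_coordinates[OF assms(1,2)] by metis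
  have "r1 s \<bullet> r2 s = 0"
    unfolding r12 inner_vector3 using cad by algebra
  moreover have "r1 s \<bullet> r3 s = 0" "r2 s \<bullet> r3 s = 0"
    unfolding r3_def by (simp_all add: dot_cross_self)
  moreover have "i mod 3 = 0 \<or> i mod 3 = 1 \<or> i mod 3 = 2" "j mod 3 = 0 \<or> j mod 3 = 1 \<or> j mod 3 = 2"
    by presburger+
  ultimately show ?thesis
    using assms(3) unfolding frame_def by (auto simp: inner_commute)
qed

lemma frame_nth3_pos:
  assumes "-1/2 \<le> s" "s < 0"
  shows "0 < frame j s $ 3"
proof -
  obtain c a d where cad: "c > 0" "a * a = 1/2 - s * s" "a \<ge> 0" "d > 0"
    and r123: "r1 s = vector [c, s, a]" "r2 s = vector [- ((1/2 + s) * d), c, c * a * d]"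
      "r3 s = vector [- c * a * d, - a, (1/2 + s + s^2) * d]"
    using frame_coordinates[OF assms] by metis
  have "s * s \<le> 1/4"
    using assms mult_mono[of "-s" "1/2" "-s" "1/2"] by simp
  then have "a > 0"
    using cad(2,3) by (cases "a = 0") auto
  moreover note quadratic_pos[of s]
  ultimately have "0 < r1 s $ 3" "0 < r2 s $ 3" "0 < r3 s $ 3"
    unfolding r123 using cad by simp_all
  then show ?thesis
    unfolding frame_def by simp
qed

lemma Rc_add_int: "Rc (t + of_int n) = Rc t"
  by (simp add: Rc_def)

lemma r0_eq_frame:
  assumes "0 \<le> w" "w < 1/12" "j < 3"
  shows "r0 (real j / 12 + w) = (rotz^^(3 * j)) (frame j (6 * w - 1/2))"
proof -
  have "j = 0 \<or> j = 1 \<or> j = 2" using assms(3) by auto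
  moreover have "(rotz^^6) v = (rotz^^2) v" for v
    by (rule funpow_rotz_cong) simp
  ultimately show ?thesis
    using assms(1,2) by (auto simp: r0_def frame_def algebra_simps)
qed

lemma Rc_sample_base:
  assumes "0 \<le> w" "w < 1/12" "q < 4" "p < 3"
  shows "Rc (real (3 * q + p) / 12 + w) = (rotz^^(q + 3 * p)) (frame p (6 * w - 1/2))"
proof -
  define u where "u = real (3 * q + p) / 12 + w"
  have "real q \<le> 3" "real p \<le> 2"
    using assms(3,4) by linarith+
  then have "\<lfloor>u\<rfloor> = 0" "\<lfloor>4 * u\<rfloor> = int q"
    unfolding u_def using assms(1,2) by (intro floor_unique; simp add: field_simps)+
  moreover have "u - real q / 4 = real p / 12 + w"
    unfolding u_def by (simp add: field_simps)
  ultimately have "Rc u = (rotz^^q) (r0 (real p / 12 + w))"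
    unfolding Rc_def Let_def by simp
  then show ?thesis
    unfolding u_def using r0_eq_frame[OF assms(1,2,4)] by (simp add: funpow_add)
qed

lemma Rc_sample:
  assumes "0 \<le> w" "w < 1/12"
  shows "Rc (real (3 * q + p) / 12 + w) = (rotz^^(q + 3 * p)) (frame p (6 * w - 1/2))"
proof -
  define p' a q' b where "p' = p mod 3" and "a = p div 3" and "q' = (q + a) mod 4" and "b = (q + a) div 4"
  have p: "p = 3 * a + p'" "p' < 3" and q: "q + a = 4 * b + q'" "q' < 4"
    unfolding p'_def a_def q'_def b_def by simp_all
  have "real (3 * q + p) / 12 + w = (real (3 * q' + p') / 12 + w) + of_int (int b)"
    using p(1) q(1) by (simp add: field_simps)
  then have "Rc (real (3 * q + p) / 12 + w) = Rc (real (3 * q' + p') / 12 + w)"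
    by (simp only: Rc_add_int)
  also have "\<dots> = (rotz^^(q' + 3 * p')) (frame p' (6 * w - 1/2))"
    by (rule Rc_sample_base[OF assms q(2) p(2)])
  also have "\<dots> = (rotz^^(q + 3 * p)) (frame p (6 * w - 1/2))"
  proof -
    have "q + 3 * p = q' + 3 * p' + 4 * (b + 2 * a)"
      using p(1) q(1) by simp
    then have "(q' + 3 * p') mod 4 = (q + 3 * p) mod 4"
      by (metis mod_mult_self2)
    then show ?thesis
      unfolding p'_def frame_mod3 by (rule funpow_rotz_cong)
  qed
  finally show ?thesis .
qed

lemma Rc_thirds:
  obtains s k p where "-1/2 \<le> s" "s < 0" "\<And>j. Rc (t + real j / 3) = (rotz^^k) (frame (p + j) s)"
proof -
  define n where "n = \<lfloor>12 * t\<rfloor>"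
  define q p where "q = nat (n mod 12) div 3" and "p = nat (n mod 12) mod 3"
  define w where "w = t - of_int n / 12"
  have w: "0 \<le> w" "w < 1/12"
    unfolding w_def n_def by linarith+
  have "3 * q + p = nat (n mod 12)"
    unfolding q_def p_def by simp
  then have "real (3 * q + p) = of_int (n mod 12)"
    by simp
  moreover have "real_of_int n = 12 * of_int (n div 12) + of_int (n mod 12)"
    by (metis div_mult_mod_eq of_int_add of_int_mult of_int_numeral mult.commute)
  ultimately have t: "t = real (3 * q + p) / 12 + w + of_int (n div 12)"
    unfolding w_def by (simp add: field_simps)
  show ?thesis
  proof
    show "-1/2 \<le> 6 * w - 1/2" "6 * w - 1/2 < 0"
      using w by simp_all
    fix j :: nat
    have "t + real j / 3 = real (3 * (q + j) + (p + j)) / 12 + w + of_int (n div 12)"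
      by (subst t) (simp add: field_simps)
    then have "Rc (t + real j / 3) = (rotz^^(q + j + 3 * (p + j))) (frame (p + j) (6 * w - 1/2))"
      by (simp only: Rc_add_int Rc_sample[OF w])
    \<comment> \<open>a shift by 1/3 adds 4 to the rotation index, which only matters mod 4\<close>
    also have "\<dots> = (rotz^^(q + 3 * p)) (frame (p + j) (6 * w - 1/2))"
    proof (rule funpow_rotz_cong)
      have "q + j + 3 * (p + j) = q + 3 * p + 4 * j" by simp
      then show "(q + j + 3 * (p + j)) mod 4 = (q + 3 * p) mod 4"
        by (metis mod_mult_self2)
    qed
    finally show "Rc (t + real j / 3) = (rotz^^(q + 3 * p)) (frame (p + j) (6 * w - 1/2))" .
  qed
qed

lemma Rc_orthogonal:
  assumes "i < 3" "j < 3" "i \<noteq> j"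
  shows "Rc (t + real i / 3) \<bullet> Rc (t + real j / 3) = 0"
proof -
  obtain s k p where s: "-1/2 \<le> s" "s < 0" and R: "\<And>j. Rc (t + real j / 3) = (rotz^^k) (frame (p + j) s)"
    by (rule Rc_thirds[of t]) blast
  have "(p + i) mod 3 \<noteq> (p + j) mod 3"
    using assms by presburger
  then show ?thesis
    unfolding R inner_funpow_rotz by (rule frame_orthogonal[OF s])
qed

lemma Rc_nth3_pos: "0 < Rc t $ 3"
proof -
  obtain s k p where s: "-1/2 \<le> s" "s < 0" and "\<And>j. Rc (t + real j / 3) = (rotz^^k) (frame (p + j) s)"
    by (rule Rc_thirds[of t]) blast
  then have "Rc t = (rotz^^k) (frame p s)"
    by (metis add.right_neutral div_0 of_nat_0)
  then show ?thesis
    by (simp add: funpow_rotz_nth3 frame_nth3_pos[OF s])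
qed

section \<open>The octant misses the curve\<close>

text \<open>
  Up to a power of rotz, every point of the curve is either rotz^j (1/sqrt 2, y, z) with
  y^2 + z^2 = 1/2 and |y| \<le> 1/2 (the pieces r1 and r2), or rotz^j (r3 u).
  For each j mod 4 the lemmas below show that one of its inner products with r1 s, r2 s, r3 s
  is nonpositive, after clearing the positive factors 1/(1 + s) and 1/(1 + u).
\<close>

lemma inner_half_circle_le:
  fixes a s y z :: real
  assumes "y * y + z * z = 1/2" "s * s + a * a = 1/2"
  shows "z * a + y * s \<le> 1/2"
proof -
  have "(z * a + y * s)^2 + (z * s - y * a)^2 = (y * y + z * z) * (a * a + s * s)"
    by algebra
  then have "(z * a + y * s)^2 + (z * s - y * a)^2 = (1/2)^2"
    using assms by (simp add: power2_eq_square)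
  then have "(z * a + y * s)^2 \<le> (1/2)^2"
    using zero_le_power2[of "z * s - y * a"] by linarith
  then show ?thesis
    by (rule power2_le_imp_le) simp
qed

lemma circle_point_rot0_bound_if_gt:
  fixes a s y z :: real
  assumes s: "-1/2 \<le> s" "s < 0" "s < y" and a: "a * a = 1/2 - s * s" "a \<ge> 0"
    and y: "y * y + z * z = 1/2" "y \<le> 1/2"
  shows "-a/2 - a * y * (1 + s) + z * (1/2 + s + s^2) \<le> 0"
proof -
  define g where "g = 1/2 + s + s^2"
  define L where "L = (1/2 - s * s) * (1 + s)^2 + g^2"
  have "(1/2 - s * s) * (1/2 + y * (1 + s))^2 - (1/2 - y * y) * g^2
      = L * (y - s)^2 + 2 * g * (1/2 + s) * (y - s)"
    unfolding L_def g_def by (simp add: field_simps power2_eq_square)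
  moreover have "(a * (1/2 + y * (1 + s)))^2 = (1/2 - s * s) * (1/2 + y * (1 + s))^2"
    unfolding a(1)[symmetric] by (simp add: power2_eq_square algebra_simps)
  moreover have "1/2 - y * y = z * z"
    using y(1) by linarith
  then have "(z * g)^2 = (1/2 - y * y) * g^2"
    by algebra
  moreover have "0 \<le> L * (y - s)^2"
    unfolding L_def using a(1) zero_le_square[of a] by (intro mult_nonneg_nonneg add_nonneg_nonneg) auto
  moreover have "0 \<le> 2 * g * (1/2 + s) * (y - s)"
    unfolding g_def using less_imp_le[OF quadratic_pos[of s]] s by simp
  ultimately have "(z * g)^2 \<le> (a * (1/2 + y * (1 + s)))^2"
    by linarith
  moreover have "0 \<le> a * (1/2 + y * (1 + s))"
  proof -
    have "y * (1 + s) \<ge> -1/2"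
    proof (cases "y \<ge> 0")
      case True
      then have "0 \<le> y * (1 + s)" using s by simp
      then show ?thesis by linarith
    next
      case False
      then have "y * (1 + s) \<ge> y * 1" using s by (intro mult_left_mono_neg) auto
      then show ?thesis using s by simp
    qed
    then show ?thesis using a by simp
  qed
  ultimately have "z * g \<le> a * (1/2 + y * (1 + s))"
    by (rule power2_le_imp_le)
  then show ?thesis
    unfolding g_def by (simp add: algebra_simps)
qed

lemma circle_point_rot0_bound:
  fixes a s y z :: real
  assumes s: "-1/2 \<le> s" "s < 0" and a: "a * a = 1/2 - s * s" "a \<ge> 0"
    and y: "y * y + z * z = 1/2" "y \<le> 1/2"
  shows "-(1/2 + s) + y * (1 + s) + z * a \<le> 0 \<or> -a/2 - a * y * (1 + s) + z * (1/2 + s + s^2) \<le> 0"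
proof (cases "y \<le> s")
  case True
  have "z * a + y * s \<le> 1/2"
    using inner_half_circle_le[OF y(1)] a(1) by simp
  then show ?thesis
    using True by (simp add: algebra_simps)
next
  case False
  then show ?thesis
    using circle_point_rot0_bound_if_gt[OF s(1,2) _ a y] by simp
qed

lemma circle_point_rot1_bound_if_le:
  fixes a c s y z :: real
  assumes c: "c * c = 1/2" "c > 0"
    and s: "-1/2 \<le> s" "s < 0" "y * (1 + s) \<le> 1/2 + s" and a: "a * a = 1/2 - s * s" "a \<ge> 0"
    and y: "y * y + z * z = 1/2" "y \<le> 1/2"
  shows "c * a * y - c * a * (1 + s) + z * (1/2 + s + s^2) \<le> 0"
proof -
  define g where "g = 1/2 + s + s^2"
  define L where "L = (1/2 - s * s) / 2 + g^2"
  define w where "w = y * (1 + s) - (1/2 + s)"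
  have "(1 + s)^2 * ((1/2) * (1/2 - s * s) * (1 + s - y)^2 - (1/2 - y * y) * g^2)
      = L * w^2 + 2 * ((-s) * ((1 + s)^2 * g) * (-w))"
    unfolding L_def g_def w_def by (simp add: field_simps power2_eq_square)
  moreover have "0 \<le> (-s) * ((1 + s)^2 * g) * (-w)"
    unfolding g_def w_def using less_imp_le[OF quadratic_pos[of s]] s
    by (intro mult_nonneg_nonneg) auto
  moreover have "0 \<le> L * w^2"
    unfolding L_def using a(1) zero_le_square[of a] by (intro mult_nonneg_nonneg add_nonneg_nonneg) auto
  ultimately have "0 \<le> (1 + s)^2 * ((1/2) * (1/2 - s * s) * (1 + s - y)^2 - (1/2 - y * y) * g^2)"
    by linarith
  moreover have "(1 + s)^2 > 0"
    using s by simp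
  ultimately have "0 \<le> (1/2) * (1/2 - s * s) * (1 + s - y)^2 - (1/2 - y * y) * g^2"
    by (simp add: zero_le_mult_iff)
  moreover have "(c * a * (1 + s - y))^2 = (c * c) * (a * a) * (1 + s - y)^2"
    by (simp add: power2_eq_square algebra_simps)
  then have "(c * a * (1 + s - y))^2 = (1/2) * (1/2 - s * s) * (1 + s - y)^2"
    unfolding a(1) c(1) .
  moreover have "1/2 - y * y = z * z"
    using y(1) by linarith
  then have "(z * g)^2 = (1/2 - y * y) * g^2"
    by algebra
  ultimately have "(z * g)^2 \<le> (c * a * (1 + s - y))^2"
    by linarith
  moreover have "0 \<le> c * a * (1 + s - y)"
    using c a s y by simp
  ultimately have "z * g \<le> c * a * (1 + s - y)"
    by (rule power2_le_imp_le)
  then show ?thesis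
    unfolding g_def by (simp add: algebra_simps)
qed

lemma circle_point_rot1_bound_if_gt:
  fixes a c s y z :: real
  assumes c: "c * c = 1/2" "c > 0"
    and s: "-1/2 \<le> s" "s < 0" "1/2 + s < y * (1 + s)" and a: "a * a = 1/2 - s * s"
    and y: "y * y + z * z = 1/2"
  shows "c * (s - y) + z * a \<le> 0"
proof -
  define w where "w = y * (1 + s) - (1/2 + s)"
  have ss: "0 \<le> 1/2 - s * s"
    using a(1) zero_le_square[of a] by linarith
  have "0 \<le> y"
  proof (rule ccontr)
    assume "\<not> 0 \<le> y"
    then have "y * (1 + s) < 0" using s by (simp add: mult_neg_pos)
    then show False using s by simp
  qed
  have "(1 + s)^2 * ((1/2) * (y - s)^2 - (1/2 - s * s) * (1/2 - y * y))
      = (1 - s * s) * w^2 + 2 * (1/2 - s * s) * (1 + s) * w"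
    unfolding w_def by (simp add: field_simps power2_eq_square)
  moreover have "0 \<le> (1/2 - s * s) * (1 + s) * w"
    unfolding w_def using ss s by (intro mult_nonneg_nonneg) auto
  moreover have "0 \<le> (1 - s * s) * w^2"
    using ss by simp
  ultimately have "0 \<le> (1 + s)^2 * ((1/2) * (y - s)^2 - (1/2 - s * s) * (1/2 - y * y))"
    by linarith
  moreover have "(1 + s)^2 > 0"
    using s by simp
  ultimately have "0 \<le> (1/2) * (y - s)^2 - (1/2 - s * s) * (1/2 - y * y)"
    by (simp add: zero_le_mult_iff)
  moreover have "(c * (y - s))^2 = (1/2) * (y - s)^2"
  proof -
    have "(c * (y - s))^2 = (c * c) * (y - s)^2"
      by (simp add: power2_eq_square algebra_simps)
    then show ?thesis
      unfolding c(1) .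
  qed
  moreover have "(z * a)^2 = (1/2 - s * s) * (1/2 - y * y)"
  proof -
    have zz: "1/2 - y * y = z * z"
      using y(1) by linarith
    show ?thesis
      unfolding zz a(1)[symmetric] by (simp add: power2_eq_square algebra_simps)
  qed
  ultimately have "(z * a)^2 \<le> (c * (y - s))^2"
    by linarith
  moreover have "0 \<le> c * (y - s)"
    using c s \<open>0 \<le> y\<close> by simp
  ultimately have "z * a \<le> c * (y - s)"
    by (rule power2_le_imp_le)
  then show ?thesis
    by (simp add: algebra_simps)
qed

lemma circle_point_rot1_bound:
  fixes a c s y z :: real
  assumes c: "c * c = 1/2" "c > 0" and s: "-1/2 \<le> s" "s < 0" and a: "a * a = 1/2 - s * s" "a \<ge> 0"
    and y: "y * y + z * z = 1/2" "y \<le> 1/2"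
  shows "c * (s - y) + z * a \<le> 0 \<or> c * a * y - c * a * (1 + s) + z * (1/2 + s + s^2) \<le> 0"
proof (cases "y * (1 + s) \<le> 1/2 + s")
  case True
  then show ?thesis using circle_point_rot1_bound_if_le[OF c s _ a y] by simp
next
  case False
  then show ?thesis using circle_point_rot1_bound_if_gt[OF c s _ a(1) y(1)] by simp
qed

lemma circle_point_rot3_bound:
  fixes a c s y z :: real
  assumes c: "c * c = 1/2" and s: "-1/2 \<le> s" "s < 0" and a: "a * a = 1/2 - s * s"
    and y: "y * y + z * z = 1/2" "-1/2 \<le> y"
  shows "-y * (1/2 + s) - (1 + s)/2 + c * z * a \<le> 0"
proof -
  define R where "R = (1 + s)/2 + y * (1/2 + s)"
  have "y * (1/2 + s) \<ge> (-1/2) * (1/2 + s)"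
    using y s by (intro mult_right_mono) auto
  then have "R \<ge> 0"
    unfolding R_def using s by (simp add: field_simps)
  have zz: "1/2 - y * y = z * z"
    using y(1) by linarith
  have "(c * z * a)^2 = (c * c) * (a * a) * (z * z)"
    by (simp add: power2_eq_square algebra_simps)
  then have "(c * z * a)^2 = (1/2) * (1/2 - s * s) * (1/2 - y * y)"
    unfolding a(1) c zz by simp
  moreover have "R^2 - (1/2) * (1/2 - s * s) * (1/2 - y * y) = (1/8) * (1 + 2 * s * y + 2 * (s + y))^2"
    unfolding R_def by (simp add: field_simps power2_eq_square)
  ultimately have "(c * z * a)^2 \<le> R^2"
    using zero_le_power2[of "1 + 2 * s * y + 2 * (s + y)"] by linarith
  then have "c * z * a \<le> R"
    using \<open>R \<ge> 0\<close> by (rule power2_le_imp_le)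
  then show ?thesis
    unfolding R_def by simp
qed

lemma quadratic_le_root_mult:
  fixes a s :: real
  assumes s: "-1/2 \<le> s" "s < 0" and a: "a * a = 1/2 - s * s" "a \<ge> 0"
  shows "1/2 + s + s^2 \<le> a * (1 + s)"
proof -
  have "s * ((2 * s + 1) * (s + 1)) \<le> 0"
    using s by (intro mult_nonpos_nonneg) auto
  then have "0 \<le> (s + 1/2) * (1/2 - s * ((2 * s + 1) * (s + 1)))"
    using s by simp
  moreover have "(1/2 - s * s) * (1 + s)^2 - (1/2 + s + s^2)^2 = (s + 1/2) * (1/2 - s * ((2 * s + 1) * (s + 1)))"
    by (simp add: field_simps power2_eq_square)
  moreover have "(a * (1 + s))^2 = (1/2 - s * s) * (1 + s)^2"
    unfolding a(1)[symmetric] by (simp add: power2_eq_square algebra_simps)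
  ultimately have "(1/2 + s + s^2)^2 \<le> (a * (1 + s))^2"
    by linarith
  moreover have "0 \<le> a * (1 + s)"
    using a s by simp
  ultimately show ?thesis
    by (rule power2_le_imp_le)
qed

lemma quadratic_le_half_sqrt2_root:
  fixes b c u :: real
  assumes c: "c * c = 1/2" "c > 0" and u: "-1/2 \<le> u" "u < 0" and b: "b * b = 1/2 - u * u" "b \<ge> 0"
  shows "1/2 + u + u^2 \<le> c * b"
proof -
  have "0 \<le> (1 + 2 * u) * (1 + u/2)" "0 \<le> u * u * (1 + u)"
    using u by simp_all
  then have "0 \<le> (1 + 2 * u) * (1 + u/2) + u * u * (1 + u)"
    by simp
  then have "0 \<le> (-u) * ((1 + 2 * u) * (1 + u/2) + u * u * (1 + u))"
    using u by (intro mult_nonneg_nonneg) auto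
  moreover have "(1/2) * (1/2 - u * u) - (1/2 + u + u^2)^2 = (-u) * ((1 + 2 * u) * (1 + u/2) + u * u * (1 + u))"
    by (simp add: field_simps power2_eq_square)
  moreover have "(c * b)^2 = (c * c) * (b * b)"
    by (simp add: power2_eq_square algebra_simps)
  then have "(c * b)^2 = (1/2) * (1/2 - u * u)"
    unfolding b(1) c(1) .
  ultimately have "(1/2 + u + u^2)^2 \<le> (c * b)^2"
    by linarith
  moreover have "0 \<le> c * b"
    using b c by simp
  ultimately show ?thesis
    by (rule power2_le_imp_le)
qed

lemma r3_point_rot0_bound:
  fixes a b s u :: real
  assumes s: "-1/2 \<le> s" "s < 0" and a: "a * a = 1/2 - s * s" "a \<ge> 0"
    and u: "-1/2 \<le> u" "u < 0" and b: "b * b = 1/2 - u * u" "b \<ge> 0"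
  shows "-a * b/2 - a * b * (1 + s) * (1 + u) + (1/2 + s + s^2) * (1/2 + u + u^2) \<le> 0"
proof -
  have "(1/2 + s + s^2) * (1/2 + u + u^2) \<le> (a * (1 + s)) * (b * (1 + u))"
    using quadratic_le_root_mult[OF s a] quadratic_le_root_mult[OF u b]
      less_imp_le[OF quadratic_pos[of s]] less_imp_le[OF quadratic_pos[of u]] a b s u
    by (intro mult_mono) auto
  moreover have "0 \<le> a * b"
    using a b by simp
  ultimately show ?thesis
    by (simp add: algebra_simps)
qed

lemma r3_point_rot1_bound:
  fixes a b c s u :: real
  assumes c: "c * c = 1/2" "c > 0" and s: "-1/2 \<le> s" "s < 0" and a: "a * a = 1/2 - s * s" "a \<ge> 0"
    and u: "-1/2 \<le> u" "u < 0" and b: "b * b = 1/2 - u * u" "b \<ge> 0"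
  shows "-c * b * (1 + u - s) + (1/2 + u + u^2) * a \<le> 0"
proof -
  have "a * a \<le> c * c"
    using a(1) c(1) zero_le_square[of s] by linarith
  then have "a^2 \<le> c^2"
    by (simp add: power2_eq_square)
  then have "a \<le> c"
    using c by (auto intro: power2_le_imp_le)
  have "(1/2 + u + u^2) * a \<le> (b * (1 + u)) * a"
    using quadratic_le_root_mult[OF u b] a by (intro mult_right_mono) auto
  also have "\<dots> \<le> (b * (1 + u)) * c"
    using \<open>a \<le> c\<close> b u by (intro mult_left_mono) auto
  also have "\<dots> \<le> c * b * (1 + u - s)"
  proof -
    have "0 \<le> c * b * (-s)"
      using c b s by (intro mult_nonneg_nonneg) auto
    then show ?thesis
      by (simp add: algebra_simps)
  qed
  finally show ?thesis
    by simp
qed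

lemma r3_point_rot2_bound_if_le:
  fixes a b s u :: real
  assumes s: "-1/2 \<le> s" "s < 0" and a: "a * a = 1/2 - s * s"
    and u: "-1/2 \<le> u" "u < 0" "u \<le> s" and b: "b * b = 1/2 - u * u" "b \<ge> 0"
  shows "-b/2 - b * s * (1 + u) + (1/2 + u + u^2) * a \<le> 0"
proof -
  define h where "h = 1/2 + u + u^2"
  define L where "L = (1/2 - u * u) * (1 + u)^2 + h^2"
  have "(1/2 - u * u) * (1/2 + s * (1 + u))^2 - (1/2 - s * s) * h^2
      = L * (s - u)^2 + 2 * h * (1/2 + u) * (s - u)"
    unfolding L_def h_def by (simp add: field_simps power2_eq_square)
  moreover have "0 \<le> L * (s - u)^2"
    unfolding L_def using b zero_le_square[of b] by (intro mult_nonneg_nonneg add_nonneg_nonneg) auto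
  moreover have "0 \<le> 2 * h * (1/2 + u) * (s - u)"
    unfolding h_def using less_imp_le[OF quadratic_pos[of u]] u by simp
  moreover have "(b * (1/2 + s * (1 + u)))^2 = (1/2 - u * u) * (1/2 + s * (1 + u))^2"
    unfolding b(1)[symmetric] by (simp add: power2_eq_square algebra_simps)
  moreover have "(h * a)^2 = (1/2 - s * s) * h^2"
    unfolding a(1)[symmetric] by (simp add: power2_eq_square algebra_simps)
  ultimately have "(h * a)^2 \<le> (b * (1/2 + s * (1 + u)))^2"
    by linarith
  moreover have "0 \<le> b * (1/2 + s * (1 + u))"
  proof -
    have "s * (1 + u) \<ge> s * 1"
      using s u by (intro mult_left_mono_neg) auto
    then have "0 \<le> 1/2 + s * (1 + u)"
      using s by linarith
    then show ?thesis
      using b by simp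
  qed
  ultimately have "h * a \<le> b * (1/2 + s * (1 + u))"
    by (rule power2_le_imp_le)
  then show ?thesis
    unfolding h_def by (simp add: algebra_simps)
qed

lemma r3_point_rot2_bound_if_gt:
  fixes a b s u :: real
  assumes s: "-1/2 \<le> s" "s < 0" "s < u" and a: "a * a = 1/2 - s * s"
    and u: "-1/2 \<le> u" "u < 0" and b: "b * b = 1/2 - u * u" "b \<ge> 0"
  shows "b * (1/2 + s) - b * (1 + s) * (1 + u) + (1/2 + u + u^2) * a \<le> 0"
proof -
  define h where "h = 1/2 + u + u^2"
  define L where "L = (1/2 - u * u) * u^2 + h^2"
  have "(1/2 - u * u) * (1/2 + u * (1 + s))^2 - (1/2 - s * s) * h^2
      = L * (s - u)^2 + 2 * ((-u) * (h * (1 + u)) * (-(s - u)))"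
    unfolding L_def h_def by (simp add: field_simps power2_eq_square)
  moreover have "0 \<le> L * (s - u)^2"
    unfolding L_def using b zero_le_square[of b] by (intro mult_nonneg_nonneg add_nonneg_nonneg) auto
  moreover have "0 \<le> (-u) * (h * (1 + u)) * (-(s - u))"
    unfolding h_def using less_imp_le[OF quadratic_pos[of u]] u s by (intro mult_nonneg_nonneg) auto
  moreover have "(b * (1/2 + u * (1 + s)))^2 = (1/2 - u * u) * (1/2 + u * (1 + s))^2"
    unfolding b(1)[symmetric] by (simp add: power2_eq_square algebra_simps)
  moreover have "(h * a)^2 = (1/2 - s * s) * h^2"
    unfolding a(1)[symmetric] by (simp add: power2_eq_square algebra_simps)
  ultimately have "(h * a)^2 \<le> (b * (1/2 + u * (1 + s)))^2"
    by linarith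
  moreover have "0 \<le> b * (1/2 + u * (1 + s))"
  proof -
    have "u * (1 + s) \<ge> u * 1"
      using s u by (intro mult_left_mono_neg) auto
    then have "0 \<le> 1/2 + u * (1 + s)"
      using u by linarith
    then show ?thesis
      using b by simp
  qed
  ultimately have "h * a \<le> b * (1/2 + u * (1 + s))"
    by (rule power2_le_imp_le)
  then show ?thesis
    unfolding h_def by (simp add: algebra_simps)
qed

lemma r3_point_rot2_bound:
  fixes a b s u :: real
  assumes s: "-1/2 \<le> s" "s < 0" and a: "a * a = 1/2 - s * s"
    and u: "-1/2 \<le> u" "u < 0" and b: "b * b = 1/2 - u * u" "b \<ge> 0"
  shows "-b/2 - b * s * (1 + u) + (1/2 + u + u^2) * a \<le> 0
    \<or> b * (1/2 + s) - b * (1 + s) * (1 + u) + (1/2 + u + u^2) * a \<le> 0"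
proof (cases "u \<le> s")
  case True
  then show ?thesis using r3_point_rot2_bound_if_le[OF s a u _ b] by simp
next
  case False
  then show ?thesis using r3_point_rot2_bound_if_gt[OF s _ a u b] by simp
qed

lemma r3_point_rot3_bound:
  fixes a b c s u :: real
  assumes c: "c * c = 1/2" "c > 0" and s: "-1/2 \<le> s" "s < 0" and a: "a * a = 1/2 - s * s" "a \<ge> 0"
    and u: "-1/2 \<le> u" "u < 0" and b: "b * b = 1/2 - u * u" "b \<ge> 0"
  shows "-b * (1/2 + s) * (1 + u) - b * (1 + s)/2 + c * a * (1/2 + u + u^2) \<le> 0"
proof -
  have "(1 + s)^2 - a^2 = 2 * (s + 1/2)^2"
    unfolding power2_eq_square a(1) by (simp add: field_simps power2_eq_square)
  then have "a^2 \<le> (1 + s)^2"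
    using zero_le_power2[of "s + 1/2"] by linarith
  then have "a \<le> 1 + s"
    using s by (auto intro: power2_le_imp_le)
  have "c * a * (1/2 + u + u^2) \<le> c * a * (c * b)"
    using quadratic_le_half_sqrt2_root[OF c u b] a c by (intro mult_left_mono) auto
  also have "\<dots> = a * b / 2"
    using c by (simp add: algebra_simps)
  also have "\<dots> \<le> b * (1 + s) / 2"
    using mult_right_mono[OF \<open>a \<le> 1 + s\<close> b(2)] by (simp add: mult.commute)
  finally have "c * a * (1/2 + u + u^2) \<le> b * (1 + s) / 2" .
  moreover have "0 \<le> b * (1/2 + s) * (1 + u)"
    using b s u by simp
  moreover have "-b * (1/2 + s) * (1 + u) = -(b * (1/2 + s) * (1 + u))"
    by simp
  ultimately show ?thesis
    by linarith
qed

definition frame_cone :: "real \<Rightarrow> (real^3) set" where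
  "frame_cone s = {x. 0 < x \<bullet> r1 s \<and> 0 < x \<bullet> r2 s \<and> 0 < x \<bullet> r3 s}"

lemma circle_point_not_in_frame_cone:
  fixes s y z :: real
  assumes s: "-1/2 \<le> s" "s < 0"
    and y: "y * y + z * z = 1/2" "-1/2 \<le> y" "y \<le> 1/2"
  shows "(rotz^^j) (vector [1 / sqrt 2, y, z]) \<notin> frame_cone s"
proof -
  obtain c a i where c0: "c = 1 / sqrt 2" and c: "c * c = 1/2" "c > 0"
    and a: "a * a = 1/2 - s * s" "a \<ge> 0" and i: "i * (1 + s) = 1" "i > 0"
    and R: "r1 s = vector [c, s, a]" "r2 s = vector [- ((1/2 + s) * i), c, c * a * i]"
      "r3 s = vector [- c * a * i, - a, (1/2 + s + s^2) * i]"
    by (rule frame_coordinates[OF s])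
  have ci: "0 \<le> c * i" "0 \<le> i" using c i by simp_all
  have "(rotz^^j) (vector [c, y, z]) \<bullet> r1 s \<le> 0 \<or> (rotz^^j) (vector [c, y, z]) \<bullet> r2 s \<le> 0
    \<or> (rotz^^j) (vector [c, y, z]) \<bullet> r3 s \<le> 0"
  proof (cases rule: funpow_rotz_cases[of j c y z])
    case 1
    have "vector [c, y, z] \<bullet> r2 s = (c * i) * (-(1/2 + s) + y * (1 + s) + z * a)"
      unfolding R inner_vector3 using i(1) c(1) by algebra
    moreover have "vector [c, y, z] \<bullet> r3 s = i * (-a/2 - a * y * (1 + s) + z * (1/2 + s + s^2))"
      unfolding R inner_vector3 using i(1) c(1) by algebra
    ultimately show ?thesis
      unfolding 1 using circle_point_rot0_bound[OF s a y(1,3)] by (metis ci mult_nonneg_nonpos)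
  next
    case 2
    have "vector [-y, c, z] \<bullet> r1 s = c * (s - y) + z * a"
      unfolding R inner_vector3 by algebra
    moreover have "vector [-y, c, z] \<bullet> r3 s = i * (c * a * y - c * a * (1 + s) + z * (1/2 + s + s^2))"
      unfolding R inner_vector3 using i(1) by algebra
    ultimately show ?thesis
      unfolding 2 using circle_point_rot1_bound[OF c s a y(1,3)] by (metis ci mult_nonneg_nonpos)
  next
    case 3
    have "vector [-c, -y, z] \<bullet> r1 s = -1/2 - y * s + z * a"
      unfolding R inner_vector3 using c(1) by algebra
    then show ?thesis
      unfolding 3 using inner_half_circle_le[OF y(1), of "-s" a] a(1) by simp
  next
    case 4
    have "vector [y, -c, z] \<bullet> r2 s = i * (-y * (1/2 + s) - (1 + s)/2 + c * z * a)"
      unfolding R inner_vector3 using i(1) c(1) by algebra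
    then show ?thesis
      unfolding 4 using circle_point_rot3_bound[OF c(1) s a(1) y(1,2)] by (metis ci mult_nonneg_nonpos)
  qed
  then show ?thesis
    unfolding c0 frame_cone_def by auto
qed

lemma r3_not_in_frame_cone:
  fixes s u :: real
  assumes s: "-1/2 \<le> s" "s < 0" and u: "-1/2 \<le> u" "u < 0"
  shows "(rotz^^j) (r3 u) \<notin> frame_cone s"
proof -
  obtain c a i where c0: "c = 1 / sqrt 2" and c: "c * c = 1/2" "c > 0"
    and a: "a * a = 1/2 - s * s" "a \<ge> 0" and i: "i * (1 + s) = 1" "i > 0"
    and R: "r1 s = vector [c, s, a]" "r2 s = vector [- ((1/2 + s) * i), c, c * a * i]"
      "r3 s = vector [- c * a * i, - a, (1/2 + s + s^2) * i]"
    by (rule frame_coordinates[OF s])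
  obtain b k where b: "b * b = 1/2 - u * u" "b \<ge> 0" and k: "k * (1 + u) = 1" "k > 0"
    and r3u: "r3 u = vector [- c * b * k, - b, (1/2 + u + u^2) * k]"
    using frame_coordinates[OF u] c0 by metis
  define h where "h = 1/2 + u + u^2"
  have pos: "0 \<le> i * k" "0 \<le> k" "0 \<le> c * i * k" using c i k by simp_all
  have "(rotz^^j) (r3 u) = (rotz^^(j + 2)) (vector [c * b * k, b, h * k])"
    unfolding r3u h_def funpow_add comp_apply funpow_rotz_vector by simp
  moreover have "(rotz^^(j + 2)) (vector [c * b * k, b, h * k]) \<bullet> r1 s \<le> 0
    \<or> (rotz^^(j + 2)) (vector [c * b * k, b, h * k]) \<bullet> r2 s \<le> 0
    \<or> (rotz^^(j + 2)) (vector [c * b * k, b, h * k]) \<bullet> r3 s \<le> 0"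
  proof (cases rule: funpow_rotz_cases[of "j + 2" "c * b * k" b "h * k"])
    case 1
    have "vector [c * b * k, b, h * k] \<bullet> r3 s
        = (i * k) * (-a * b/2 - a * b * (1 + s) * (1 + u) + (1/2 + s + s^2) * h)"
      unfolding R inner_vector3 using i(1) k(1) c(1) by algebra
    then show ?thesis
      unfolding 1 using r3_point_rot0_bound[OF s a u b, folded h_def] by (metis pos mult_nonneg_nonpos)
  next
    case 2
    have "vector [-b, c * b * k, h * k] \<bullet> r1 s = k * (-c * b * (1 + u - s) + h * a)"
      unfolding R inner_vector3 using k(1) by algebra
    then show ?thesis
      unfolding 2 using r3_point_rot1_bound[OF c s a u b, folded h_def] by (metis pos mult_nonneg_nonpos)
  next
    case 3
    have "vector [- (c * b * k), - b, h * k] \<bullet> r1 s = k * (-b/2 - b * s * (1 + u) + h * a)"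
      unfolding R inner_vector3 using k(1) c(1) by algebra
    moreover have "vector [- (c * b * k), - b, h * k] \<bullet> r2 s
        = (c * i * k) * (b * (1/2 + s) - b * (1 + s) * (1 + u) + h * a)"
      unfolding R inner_vector3 using k(1) i(1) by algebra
    ultimately show ?thesis
      unfolding 3 using r3_point_rot2_bound[OF s a(1) u b, folded h_def] by (metis pos mult_nonneg_nonpos)
  next
    case 4
    have "vector [b, - (c * b * k), h * k] \<bullet> r2 s
        = (i * k) * (-b * (1/2 + s) * (1 + u) - b * (1 + s)/2 + c * a * h)"
      unfolding R inner_vector3 using k(1) i(1) c(1) by algebra
    then show ?thesis
      unfolding 4 using r3_point_rot3_bound[OF c s a u b, folded h_def] by (metis pos mult_nonneg_nonpos)
  qed
  ultimately show ?thesis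
    unfolding frame_cone_def by auto
qed

lemma frame_not_in_frame_cone:
  fixes s u :: real
  assumes s: "-1/2 \<le> s" "s < 0" and u: "-1/2 \<le> u" "u < 0"
  shows "(rotz^^j) (frame m u) \<notin> frame_cone s"
proof -
  obtain c a k where c0: "c = 1 / sqrt 2" and c: "c * c = 1/2" "c > 0"
    and a: "a * a = 1/2 - u * u" "a \<ge> 0" and k: "k * (1 + u) = 1" "k > 0"
    and R: "r1 u = vector [c, u, a]" "r2 u = vector [- ((1/2 + u) * k), c, c * a * k]"
    by (rule frame_coordinates[OF u])
  have "(rotz^^j) (r1 u) \<notin> frame_cone s"
  proof -
    have "u * u + a * a = 1/2" "-1/2 \<le> u" "u \<le> 1/2"
      using a(1) u by simp_all
    then show ?thesis
      unfolding R(1) c0 by (rule circle_point_not_in_frame_cone[OF s])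
  qed
  moreover have "(rotz^^j) (r2 u) \<notin> frame_cone s"
  proof -
    have circle: "((1/2 + u) * k) * ((1/2 + u) * k) + (c * a * k) * (c * a * k) = 1/2"
      using k(1) c(1) a(1) by algebra
    have "0 \<le> (1/2 + u) * k"
      using k u by simp
    then have "-1/2 \<le> (1/2 + u) * k"
      by linarith
    moreover have "(1/2 + u) * k \<le> 1/2"
      using k mult_pos_neg[of k u] u(2) by (simp add: algebra_simps)
    ultimately have "(rotz^^Suc j) (vector [c, (1/2 + u) * k, c * a * k]) \<notin> frame_cone s"
      unfolding c0 by (rule circle_point_not_in_frame_cone[OF s circle[unfolded c0]])
    moreover have "(rotz^^j) (r2 u) = (rotz^^Suc j) (vector [c, (1/2 + u) * k, c * a * k])"
      unfolding R(2) funpow_Suc_right by (simp add: rotz_vector)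
    ultimately show ?thesis
      by simp
  qed
  moreover have "(rotz^^j) (r3 u) \<notin> frame_cone s"
    by (rule r3_not_in_frame_cone[OF s u])
  ultimately show ?thesis
    unfolding frame_def by simp
qed

lemma octant_eq_frame_cone:
  assumes "\<And>j. Rc (t + real j / 3) = (rotz^^k) (frame (p + j) s)"
  shows "octant t = {x \<in> sphere 0 1. (rotz^^(3 * k)) x \<in> frame_cone s}"
proof -
  have "{..<3::nat} = {0, 1, 2}" by auto
  then have thirds: "{0, 1/3, 2/3} = (\<lambda>j. real j / 3) ` {..<3}"
    by simp
  have "x \<bullet> Rc (t + real j / 3) = (rotz^^(3 * k)) x \<bullet> frame (p + j) s" for x j
    using inner_funpow_rotz_shift[of 0 x k] by (simp add: assms)
  then have "(\<forall>j<3. 0 < x \<bullet> Rc (t + real j / 3))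
      \<longleftrightarrow> (\<forall>v\<in>(\<lambda>j. frame (p + j) s) ` {..<3}. 0 < (rotz^^(3 * k)) x \<bullet> v)" for x
    by auto
  then have "(\<forall>j<3. 0 < x \<bullet> Rc (t + real j / 3)) \<longleftrightarrow> (rotz^^(3 * k)) x \<in> frame_cone s" for x
    unfolding frame_shift_image frame_cone_def by simp
  then show ?thesis
    unfolding octant_def thirds by auto
qed

lemma Rc_not_in_octant: "Rc t' \<notin> octant t"
proof -
  obtain s k p where s: "-1/2 \<le> s" "s < 0" and R: "\<And>j. Rc (t + real j / 3) = (rotz^^k) (frame (p + j) s)"
    by (rule Rc_thirds[of t]) blast
  obtain s' k' p' where s': "-1/2 \<le> s'" "s' < 0" and R': "\<And>j. Rc (t' + real j / 3) = (rotz^^k') (frame (p' + j) s')"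
    by (rule Rc_thirds[of t']) blast
  have "Rc t' = (rotz^^k') (frame p' s')"
    using R'[of 0] by simp
  then have "(rotz^^(3 * k)) (Rc t') = (rotz^^(3 * k + k')) (frame p' s')"
    by (simp add: funpow_add)
  then show ?thesis
    unfolding octant_eq_frame_cone[OF R] using frame_not_in_frame_cone[OF s s'] by simp
qed

lemma northpole_in_octant: "northpole \<in> octant t"
proof -
  have "northpole \<bullet> v = v $ 3" for v
    by (subst (2) vector3_eta) (simp add: northpole_def inner_vector3)
  moreover have "norm northpole = 1"
    by (simp add: northpole_def norm_eq_sqrt_inner inner_vector3)
  ultimately show ?thesis
    unfolding octant_def by (simp add: Rc_nth3_pos)
qed

section \<open>Connectedness\<close>

lemma connected_sphere_inter_open_halfspaces:
  fixes f :: "'b \<Rightarrow> 'a::real_inner"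
  assumes "S \<noteq> {}"
  shows "connected {r \<in> sphere 0 1. \<forall>x\<in>S. 0 < r \<bullet> f x}"
proof -
  define K where "K = (\<Inter>x\<in>S. {r. 0 < f x \<bullet> r})"
  have "convex K"
    unfolding K_def by (intro convex_INT ballI convex_halfspace_gt)
  moreover have "0 \<notin> K"
    using assms unfolding K_def by auto
  then have "continuous_on K (\<lambda>r. r /\<^sub>R norm r)"
    by (intro continuous_intros) auto
  moreover have "(\<lambda>r. r /\<^sub>R norm r) ` K = {r \<in> sphere 0 1. \<forall>x\<in>S. 0 < r \<bullet> f x}"
  proof (intro equalityI subsetI)
    fix y assume "y \<in> (\<lambda>r. r /\<^sub>R norm r) ` K"
    then obtain r where r: "r \<in> K" "y = r /\<^sub>R norm r" by blast
    with \<open>0 \<notin> K\<close> have "norm r > 0" by auto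
    with r show "y \<in> {r \<in> sphere 0 1. \<forall>x\<in>S. 0 < r \<bullet> f x}"
      unfolding K_def by (auto simp: inner_commute)
  next
    fix y assume "y \<in> {r \<in> sphere 0 1. \<forall>x\<in>S. 0 < r \<bullet> f x}"
    then have "y \<in> K" "y = y /\<^sub>R norm y"
      unfolding K_def by (auto simp: inner_commute)
    then show "y \<in> (\<lambda>r. r /\<^sub>R norm r) ` K" by blast
  qed
  ultimately show ?thesis
    by (metis connected_continuous_image convex_connected)
qed

lemma closure_subset_connected_component:
  assumes "connected C" "C \<subseteq> U" "p \<in> C"
  shows "closure C \<inter> U \<subseteq> connected_component_set U p"
proof
  fix x assume x: "x \<in> closure C \<inter> U"
  have "connected (insert x C)"
    using x closure_subset by (intro connected_intermediate_closure[OF assms(1)]) auto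
  then show "x \<in> connected_component_set U p"
    using connected_component_maximal[of p "insert x C" U] x assms(2,3) by blast
qed

theorem lemma3p3:
  fixes t :: real
  shows "Rc t \<bullet> Rc (t + 1/3) = 0 \<and> Rc t \<bullet> Rc (t + 2/3) = 0 \<and>
         Rc (t + 1/3) \<bullet> Rc (t + 2/3) = 0 \<and> closure (octant t) \<subseteq> regionA"
proof (intro conjI)
  show "Rc t \<bullet> Rc (t + 1/3) = 0" "Rc t \<bullet> Rc (t + 2/3) = 0" "Rc (t + 1/3) \<bullet> Rc (t + 2/3) = 0"
    using Rc_orthogonal[of 0 1 t] Rc_orthogonal[of 0 2 t] Rc_orthogonal[of 1 2 t] by simp_all
  have "connected (octant t)"
    unfolding octant_def by (rule connected_sphere_inter_open_halfspaces) simp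
  moreover have "octant t \<subseteq> sphere 0 1 - Gamma"
    using Rc_not_in_octant unfolding Gamma_def octant_def by blast
  ultimately have "closure (octant t) \<inter> (sphere 0 1 - Gamma) \<subseteq> connected_component_set (sphere 0 1 - Gamma) northpole"
    using northpole_in_octant by (rule closure_subset_connected_component)
  moreover have "closure (octant t) \<subseteq> sphere 0 1"
    by (rule closure_minimal) (auto simp: octant_def)
  ultimately show "closure (octant t) \<subseteq> regionA"
    unfolding regionA_def by blast
qed

end
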